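(* The Petersen graph is $4$-ordered.
   Context: A simple graph $G$ is called $k$-ordered if for every sequence $v_1,\ldots,v_k$ of $k$ distinct vertices of $G$ there exists a cycle in $G$ containing these $k$ vertices in the specified (cyclic) order. The Petersen graph is the $3$-regular graph on $10$ vertices consisting of an outer $5$-cycle $B_1B_2B_3B_4B_5$, an inner "pentagram" on $A_1,\ldots,A_5$ with $A_i$ adjacent to $A_{i\pm 2 \bmod 5}$, and the edges $A_iB_i$ for $i=1,\ldots,5$. *)

theory Defs
  imports Main "HOL-Library.Sublist"
begin

definition is_cycle :: "'a set \<Rightarrow> ('a \<Rightarrow> 'a \<Rightarrow> bool) \<Rightarrow> 'a list \<Rightarrow> bool" where
  "is_cycle V E c \<longleftrightarrow> length c \<ge> 3 \<and> distinct c \<and> set c \<subseteq> V \<and>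
     (\<forall>i < length c. E (c ! i) (c ! ((i + 1) mod length c)))"

definition in_cyclic_order :: "'a list \<Rightarrow> 'a list \<Rightarrow> bool" where
  "in_cyclic_order vs c \<longleftrightarrow> (\<exists>r < length c. subseq vs (rotate r c))"

definition k_ordered :: "nat \<Rightarrow> 'a set \<Rightarrow> ('a \<Rightarrow> 'a \<Rightarrow> bool) \<Rightarrow> bool" where
  "k_ordered k V E \<longleftrightarrow>
     (\<forall>vs. length vs = k \<and> distinct vs \<and> set vs \<subseteq> V \<longrightarrow>
        (\<exists>c. is_cycle V E c \<and> in_cyclic_order vs c))"

(* Petersen graph. Vertex (True, i) is B_(i+1) (outer 5-cycle),
   vertex (False, i) is A_(i+1) (inner pentagram), i = 0..4. *)
definition petersen_V :: "(bool \<times> nat) set" where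
  "petersen_V = {(b, i). i < 5}"

definition petersen_E0 :: "bool \<times> nat \<Rightarrow> bool \<times> nat \<Rightarrow> bool" where
  "petersen_E0 u v \<longleftrightarrow> (case (u, v) of
      ((True, i), (True, j)) \<Rightarrow> i < 5 \<and> j = (i + 1) mod 5
    | ((False, i), (False, j)) \<Rightarrow> i < 5 \<and> j = (i + 2) mod 5
    | ((False, i), (True, j)) \<Rightarrow> i < 5 \<and> j = i
    | _ \<Rightarrow> False)"

definition petersen_E :: "bool \<times> nat \<Rightarrow> bool \<times> nat \<Rightarrow> bool" where
  "petersen_E u v \<longleftrightarrow> petersen_E0 u v \<or> petersen_E0 v u"

end

theory Submission
  imports Defs
begin

text \<open>Automorphisms map cycles to cycles and preserve the cyclic order of the vertices on them,
  so in a vertex-transitive graph it suffices to find ordered cycles for the sequences starting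
  at one fixed vertex. The Petersen graph is vertex-transitive: the rotation \<open>i \<mapsto> i + 1\<close> and a map
  exchanging pentagon and pentagram are automorphisms.
  For the 504 sequences \<open>B\<^sub>1, x, y, z\<close> a list of 40 cycles starting at \<open>B\<^sub>1\<close>, found by
  computer search, contains each of them as a subsequence; this is checked by evaluation.\<close>

definition has_ordered_cycle :: "'a set \<Rightarrow> ('a \<Rightarrow> 'a \<Rightarrow> bool) \<Rightarrow> 'a list \<Rightarrow> bool" where
  "has_ordered_cycle V E vs \<longleftrightarrow> (\<exists>c. is_cycle V E c \<and> in_cyclic_order vs c)"

definition graph_automorphism :: "'a set \<Rightarrow> ('a \<Rightarrow> 'a \<Rightarrow> bool) \<Rightarrow> ('a \<Rightarrow> 'a) \<Rightarrow> bool" where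
  "graph_automorphism V E f \<longleftrightarrow> bij_betw f V V \<and> (\<forall>u\<in>V. \<forall>v\<in>V. E (f u) (f v) \<longleftrightarrow> E u v)"

lemma graph_automorphism_id: "graph_automorphism V E id"
  by (simp add: graph_automorphism_def)

lemma graph_automorphism_comp:
  assumes "graph_automorphism V E f" "graph_automorphism V E g"
  shows "graph_automorphism V E (f \<circ> g)"
  using assms unfolding graph_automorphism_def
  by (auto intro: bij_betw_trans simp: bij_betw_apply)

lemma graph_automorphism_funpow:
  assumes "graph_automorphism V E f"
  shows "graph_automorphism V E (f ^^ n)"
  by (induction n) (simp_all only: funpow.simps graph_automorphism_id graph_automorphism_comp assms)

lemma is_cycle_map:
  assumes f: "graph_automorphism V E f" and c: "is_cycle V E c"
  shows "is_cycle V E (map f c)"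
proof -
  have bij: "bij_betw f V V" and edge: "\<And>u v. u \<in> V \<Longrightarrow> v \<in> V \<Longrightarrow> E (f u) (f v) = E u v"
    using f unfolding graph_automorphism_def by blast+
  have "set c \<subseteq> V" using c by (simp add: is_cycle_def)
  then have "inj_on f (set c)" and "set (map f c) \<subseteq> V"
    using bij by (auto intro: inj_on_subset bij_betw_imp_inj_on simp: bij_betw_apply)
  moreover have "E (map f c ! i) (map f c ! ((i + 1) mod length (map f c)))"
    if "i < length c" for i
  proof -
    have "(i + 1) mod length c < length c" using that by (intro mod_less_divisor) linarith
    then show ?thesis
      using c that edge \<open>set c \<subseteq> V\<close> unfolding is_cycle_def by (simp add: subset_iff)
  qed
  ultimately show ?thesis
    using c unfolding is_cycle_def by (simp add: distinct_map)
qed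

lemma in_cyclic_order_map:
  "in_cyclic_order vs c \<Longrightarrow> in_cyclic_order (map f vs) (map f c)"
  unfolding in_cyclic_order_def by (metis length_map rotate_map subseq_map)

lemma has_ordered_cycle_map:
  "graph_automorphism V E f \<Longrightarrow> has_ordered_cycle V E vs \<Longrightarrow> has_ordered_cycle V E (map f vs)"
  unfolding has_ordered_cycle_def using is_cycle_map in_cyclic_order_map by blast

lemma has_ordered_cycle_if_subseq:
  assumes "is_cycle V E c" "subseq vs c"
  shows "has_ordered_cycle V E vs"
proof -
  have "0 < length c" using assms(1) unfolding is_cycle_def by linarith
  then show ?thesis
    using assms unfolding has_ordered_cycle_def in_cyclic_order_def by force
qed

lemma k_ordered_if_vertex_transitive:
  assumes "v\<^sub>0 \<in> V"
    and transitive: "\<And>v. v \<in> V \<Longrightarrow> \<exists>f. graph_automorphism V E f \<and> f v\<^sub>0 = v"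
    and rooted: "\<And>ws. length ws = k \<Longrightarrow> distinct (v\<^sub>0 # ws) \<Longrightarrow> set ws \<subseteq> V \<Longrightarrow>
                   has_ordered_cycle V E (v\<^sub>0 # ws)"
  shows "k_ordered (Suc k) V E"
  unfolding k_ordered_def has_ordered_cycle_def[symmetric]
proof (intro allI impI, elim conjE)
  fix vs assume len: "length vs = Suc k" and dist: "distinct vs" and sub: "set vs \<subseteq> V"
  then obtain v rest where vs: "vs = v # rest" by (cases vs) auto
  obtain f where f: "graph_automorphism V E f" and fv: "f v\<^sub>0 = v"
    using transitive sub vs by auto
  have "f ` V = V" using f by (simp add: graph_automorphism_def bij_betw_def)
  define ws where "ws = map (inv_into V f) rest"
  have map_ws: "map f (v\<^sub>0 # ws) = vs"
    using sub \<open>f ` V = V\<close> by (simp add: ws_def vs fv f_inv_into_f map_idI subset_iff)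
  have "set ws \<subseteq> V"
    using sub \<open>f ` V = V\<close> by (auto simp: ws_def vs intro!: inv_into_into)
  moreover have "distinct (v\<^sub>0 # ws)"
    using dist map_ws by (metis distinct_map)
  ultimately have "has_ordered_cycle V E (v\<^sub>0 # ws)"
    using rooted len by (simp add: ws_def vs)
  then show "has_ordered_cycle V E vs"
    using has_ordered_cycle_map[OF f] map_ws by metis
qed

lemma graph_automorphism_finiteI:
  assumes "finite V" "f ` V = V" "\<forall>u\<in>V. \<forall>v\<in>V. E (f u) (f v) \<longleftrightarrow> E u v"
  shows "graph_automorphism V E f"
  using assms finite_surj_inj[of V f] by (simp add: graph_automorphism_def bij_betw_def)

abbreviation outer :: "nat \<Rightarrow> bool \<times> nat" where "outer i \<equiv> (True, i)"
abbreviation inner :: "nat \<Rightarrow> bool \<times> nat" where "inner i \<equiv> (False, i)"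

lemma petersen_V_eq:
  "petersen_V = {outer 0, outer 1, outer 2, outer 3, outer 4,
                 inner 0, inner 1, inner 2, inner 3, inner 4}"
  by (auto simp: petersen_V_def less_Suc_eq numeral_eq_Suc)

definition petersen_rotation :: "bool \<times> nat \<Rightarrow> bool \<times> nat" where
  "petersen_rotation = (\<lambda>(b, i). (b, (i + 1) mod 5))"

text \<open>Doubling modulo 5 turns the pentagram steps \<open>\<plusminus>2\<close> into the pentagon steps
  \<open>\<plusminus>4 = \<minusplus>1\<close> and vice versa.\<close>

definition petersen_swap :: "bool \<times> nat \<Rightarrow> bool \<times> nat" where
  "petersen_swap = (\<lambda>(b, i). (\<not> b, 2 * i mod 5))"

lemma graph_automorphism_petersen_rotation:
  "graph_automorphism petersen_V petersen_E petersen_rotation"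
  by (rule graph_automorphism_finiteI)
    (simp_all add: petersen_V_eq petersen_rotation_def petersen_E_def petersen_E0_def
      insert_commute numeral_2_eq_2)

lemma graph_automorphism_petersen_swap:
  "graph_automorphism petersen_V petersen_E petersen_swap"
  by (rule graph_automorphism_finiteI)
    (simp_all add: petersen_V_eq petersen_swap_def petersen_E_def petersen_E0_def
      insert_commute numeral_2_eq_2)

lemma petersen_rotation_funpow: "(petersen_rotation ^^ n) (b, 0) = (b, n mod 5)"
  by (induction n) (simp_all add: petersen_rotation_def mod_Suc_eq)

lemma petersen_vertex_transitive:
  assumes "v \<in> petersen_V"
  shows "\<exists>f. graph_automorphism petersen_V petersen_E f \<and> f (outer 0) = v"
proof -
  obtain b i where "v = (b, i)" and "i < 5" using assms by (auto simp: petersen_V_def)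
  then have rot: "(petersen_rotation ^^ i) (b, 0) = v" by (simp add: petersen_rotation_funpow)
  have rotation: "graph_automorphism petersen_V petersen_E (petersen_rotation ^^ i)"
    by (intro graph_automorphism_funpow graph_automorphism_petersen_rotation)
  show ?thesis
  proof (cases b)
    case True
    with rot rotation show ?thesis by auto
  next
    case False
    with rot have "(petersen_rotation ^^ i \<circ> petersen_swap) (outer 0) = v"
      by (simp add: petersen_swap_def)
    moreover have
      "graph_automorphism petersen_V petersen_E (petersen_rotation ^^ i \<circ> petersen_swap)"
      using rotation graph_automorphism_petersen_swap by (rule graph_automorphism_comp)
    ultimately show ?thesis by blast
  qed
qed

definition petersen_witness_cycles :: "(bool \<times> nat) list list" where
  "petersen_witness_cycles =
   [[outer 0, outer 1, outer 2, outer 3, outer 4, inner 4, inner 1, inner 3, inner 0],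
    [outer 0, outer 4, outer 3, outer 2, inner 2, inner 0, inner 3, inner 1, outer 1],
    [outer 0, inner 0, inner 3, inner 1, inner 4, inner 2, outer 2, outer 3, outer 4],
    [outer 0, outer 1, inner 1, inner 3, outer 3, outer 2, inner 2, inner 4, outer 4],
    [outer 0, inner 0, inner 2, inner 4, inner 1, inner 3, outer 3, outer 2, outer 1],
    [outer 0, outer 4, outer 3, outer 2, outer 1, inner 1, inner 4, inner 2, inner 0],
    [outer 0, outer 4, inner 4, inner 1, outer 1, outer 2, outer 3, inner 3, inner 0],
    [outer 0, inner 0, inner 2, outer 2, outer 3, inner 3, inner 1, inner 4, outer 4],
    [outer 0, outer 4, inner 4, inner 1, inner 3, inner 0, inner 2, outer 2, outer 1],
    [outer 0, outer 1, inner 1, inner 4, inner 2, inner 0, inner 3, outer 3, outer 4],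
    [outer 0, inner 0, inner 3, outer 3, outer 4, inner 4, inner 2, outer 2, outer 1],
    [outer 0, outer 1, inner 1, inner 4, outer 4, outer 3, outer 2, inner 2, inner 0],
    [outer 0, outer 1, outer 2, outer 3, inner 3, inner 0, inner 2, inner 4, outer 4],
    [outer 0, inner 0, inner 2, outer 2, outer 1, inner 1, inner 3, outer 3, outer 4],
    [outer 0, inner 0, inner 2, inner 4, outer 4, outer 3, inner 3, inner 1, outer 1],
    [outer 0, inner 0, inner 3, inner 1, outer 1, outer 2, inner 2, inner 4, outer 4],
    [outer 0, outer 1, outer 2, inner 2, inner 4, outer 4, outer 3, inner 3, inner 0],
    [outer 0, outer 4, outer 3, inner 3, inner 1, outer 1, outer 2, inner 2, inner 0],
    [outer 0, outer 4, outer 3, inner 3, inner 0, inner 2, inner 4, inner 1, outer 1],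
    [outer 0, outer 4, inner 4, inner 2, outer 2, outer 1, inner 1, inner 3, inner 0],
    [outer 0, outer 1, outer 2, inner 2, inner 0, inner 3, inner 1, inner 4, outer 4],
    [outer 0, outer 1, inner 1, inner 3, outer 3, outer 4, inner 4, inner 2, inner 0],
    [outer 0, outer 4, inner 4, inner 2, inner 0, inner 3, outer 3, outer 2, outer 1],
    [outer 0, inner 0, inner 2, outer 2, outer 3, outer 4, inner 4, inner 1, outer 1],
    [outer 0, inner 0, inner 3, outer 3, outer 2, outer 1, inner 1, inner 4, outer 4],
    [outer 0, outer 1, inner 1, inner 3, inner 0, inner 2, outer 2, outer 3, outer 4],
    [outer 0, inner 0, inner 2, inner 4, inner 1, outer 1, outer 2, outer 3, outer 4],
    [outer 0, inner 0, inner 3, inner 1, inner 4, outer 4, outer 3, outer 2, outer 1],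
    [outer 0, outer 1, outer 2, outer 3, outer 4, inner 4, inner 2, inner 0],
    [outer 0, outer 1, outer 2, inner 2, inner 0, inner 3, outer 3, outer 4],
    [outer 0, outer 1, inner 1, inner 3, inner 0, inner 2, inner 4, outer 4],
    [outer 0, outer 1, inner 1, inner 4, outer 4, outer 3, inner 3, inner 0],
    [outer 0, outer 4, outer 3, outer 2, outer 1, inner 1, inner 3, inner 0],
    [outer 0, outer 4, outer 3, inner 3, inner 0, inner 2, outer 2, outer 1],
    [outer 0, outer 4, inner 4, inner 1, outer 1, outer 2, inner 2, inner 0],
    [outer 0, outer 4, inner 4, inner 2, inner 0, inner 3, inner 1, outer 1],
    [outer 0, inner 0, inner 2, outer 2, outer 1, inner 1, inner 4, outer 4],
    [outer 0, inner 0, inner 2, inner 4, outer 4, outer 3, outer 2, outer 1],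
    [outer 0, inner 0, inner 3, outer 3, outer 4, inner 4, inner 1, outer 1],
    [outer 0, inner 0, inner 3, inner 1, outer 1, outer 2, outer 3, outer 4]]"

lemma petersen_witness_cycles_are_cycles:
  "\<forall>c\<in>set petersen_witness_cycles. is_cycle petersen_V petersen_E c"
  unfolding petersen_witness_cycles_def petersen_V_eq is_cycle_def petersen_E_def petersen_E0_def
  by code_simp

lemma petersen_witness_cycles_cover:
  "\<forall>x\<in>petersen_V. \<forall>y\<in>petersen_V. \<forall>z\<in>petersen_V. distinct [outer 0, x, y, z] \<longrightarrow>
     (\<exists>c\<in>set petersen_witness_cycles. subseq [outer 0, x, y, z] c)"
  unfolding petersen_witness_cycles_def petersen_V_eq by code_simp

lemma petersen_rooted_has_ordered_cycle:
  assumes "length ws = 3" "distinct (outer 0 # ws)" "set ws \<subseteq> petersen_V"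
  shows "has_ordered_cycle petersen_V petersen_E (outer 0 # ws)"
proof -
  obtain x y z where ws: "ws = [x, y, z]"
    using assms(1) by (auto simp: numeral_eq_Suc length_Suc_conv)
  moreover have "x \<in> petersen_V" "y \<in> petersen_V" "z \<in> petersen_V"
    using assms(3) ws by auto
  ultimately obtain c where "c \<in> set petersen_witness_cycles" and "subseq (outer 0 # ws) c"
    using petersen_witness_cycles_cover assms(2) by blast
  with petersen_witness_cycles_are_cycles show ?thesis
    by (intro has_ordered_cycle_if_subseq) auto
qed

theorem theorem2p5:
  shows "k_ordered 4 petersen_V petersen_E"
proof -
  have "outer 0 \<in> petersen_V" by (simp add: petersen_V_def)
  then have "k_ordered (Suc 3) petersen_V petersen_E"
    using petersen_vertex_transitive petersen_rooted_has_ordered_cycle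
    by (rule k_ordered_if_vertex_transitive)
  then show ?thesis by simp
qed

end
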